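(* Let $\mathcal N : L(\mathbb C^{2^{n}})\to L(\mathbb C^{2^{k}})$ be a linear map. Let $\rho$ be an $n$-qubit density matrix and let $U^{\rho}$ be an $(r+n)$-qubit unitary preparing a purification of $\rho$, i.e. $U^{\rho}\ket{0^{r+n}}=\ket{\psi}$ with $\operatorname{Tr}_{\mathbb C^{2^{r}}}\ket{\psi}\bra{\psi}=\rho$ (the first $r$ qubits being the purifying register). Assume $U_{\mathcal N}$ is an $(m+n+k)$-qubit unitary which is an $(\alpha,m,\epsilon)$-block encoding of $\Lambda_{\mathcal N}^{\mathrm T_1}$. Consider $m+r+n+k$ qubits arranged as registers of sizes $m$, $r$, $n$, $k$ (in this order), and the unitary $$V=\bigl(\mathbb I_m\otimes U^{\rho\dagger}\otimes\mathbb I_k\bigr)\bigl(U_{\mathcal N}\otimes\mathbb I_r\bigr)\bigl(\mathbb I_m\otimes U^{\rho}\otimes\mathbb I_k\bigr),$$ where $U^{\rho}$ and $U^{\rho\dagger}$ act on the $r$- and $n$-qubit registers, and $U_{\mathcal N}\otimes\mathbb I_r$ denotes $U_{\mathcal N}$ acting on the $m$-, $n$- and $k$-qubit registers and the identity on the $r$-qubit register. Then $V$ is an $(\alpha,m+r+n,\epsilon)$-block encoding of $\mathcal N(\rho)$, i.e. $\bigl\|\mathcal N(\rho)-\alpha(\bra{0^{m+r+n}}\otimes\mathbb I_k)V(\ket{0^{m+r+n}}\otimes\mathbb I_k)\bigr\|_\infty\le\epsilon$.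
   Context: $\|\cdot\|_\infty$ is the operator norm and $\mathbb I_j$ the identity on $j$ qubits. Block encoding: for an $n$-qubit matrix $A$, an $(m+n)$-qubit unitary $U$ is an $(\alpha,m,\epsilon)$-block encoding of $A$ (with $\alpha,\epsilon\ge 0$) if $\bigl\|A-\alpha(\bra{0^m}\otimes\mathbb I_n)U(\ket{0^m}\otimes\mathbb I_n)\bigr\|_\infty\le\epsilon$. For a linear map $\mathcal N:L(\mathcal X)\to L(\mathcal Y)$, its Choi matrix is $\Lambda_{\mathcal N}=(\mathcal I\otimes\mathcal N)(\ket{\Phi^+}\bra{\Phi^+})\in L(\mathcal X\otimes\mathcal Y)$, where $\ket{\Phi^+}=\sum_i\ket{ii}$ is the unnormalized maximally entangled vector on $\mathcal X\otimes\mathcal X$ (computational basis). $\Lambda_{\mathcal N}^{\mathrm T_1}$ denotes the partial transpose (in the computational basis) of $\Lambda_{\mathcal N}$ on the first tensor factor $\mathcal X$. *)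

theory Defs
  imports "Jordan_Normal_Form.Matrix"
begin

text \<open>Qubit registers are ordered big-endian: in a tensor product A (x) B the
  index of the first factor is the most significant one.\<close>

definition cadj :: "complex mat \<Rightarrow> complex mat" where
  "cadj A = mat (dim_col A) (dim_row A) (\<lambda>(i,j). cnj (A $$ (j,i)))"

definition unitary :: "nat \<Rightarrow> complex mat \<Rightarrow> bool" where
  "unitary d U \<longleftrightarrow> U \<in> carrier_mat d d \<and> cadj U * U = 1\<^sub>m d \<and> U * cadj U = 1\<^sub>m d"

definition kron :: "complex mat \<Rightarrow> complex mat \<Rightarrow> complex mat" where
  "kron A B = mat (dim_row A * dim_row B) (dim_col A * dim_col B)
     (\<lambda>(i,j). A $$ (i div dim_row B, j div dim_col B) * B $$ (i mod dim_row B, j mod dim_col B))"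

definition vnorm :: "complex vec \<Rightarrow> real" where
  "vnorm v = sqrt (\<Sum>i<dim_vec v. (cmod (v $ i))\<^sup>2)"

definition op_norm :: "complex mat \<Rightarrow> real" where
  "op_norm A = Sup {vnorm (A *\<^sub>v v) | v. v \<in> carrier_vec (dim_col A) \<and> vnorm v \<le> 1}"

definition ket0 :: "nat \<Rightarrow> complex mat" where
  "ket0 m = mat (2^m) 1 (\<lambda>(i,j). if i = 0 then 1 else 0)"

definition bra0 :: "nat \<Rightarrow> complex mat" where
  "bra0 m = mat 1 (2^m) (\<lambda>(i,j). if j = 0 then 1 else 0)"

definition block_encoding :: "real \<Rightarrow> nat \<Rightarrow> nat \<Rightarrow> real \<Rightarrow> complex mat \<Rightarrow> complex mat \<Rightarrow> bool" where
  "block_encoding \<alpha> m n \<epsilon> A U \<longleftrightarrow>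
     0 \<le> \<alpha> \<and> 0 \<le> \<epsilon> \<and> A \<in> carrier_mat (2^n) (2^n) \<and> unitary (2^(m+n)) U \<and>
     op_norm (A - complex_of_real \<alpha> \<cdot>\<^sub>m
        (kron (bra0 m) (1\<^sub>m (2^n)) * U * kron (ket0 m) (1\<^sub>m (2^n)))) \<le> \<epsilon>"

definition lin_map :: "nat \<Rightarrow> nat \<Rightarrow> (complex mat \<Rightarrow> complex mat) \<Rightarrow> bool" where
  "lin_map dX dY N \<longleftrightarrow>
     (\<forall>A \<in> carrier_mat dX dX. N A \<in> carrier_mat dY dY) \<and>
     (\<forall>A \<in> carrier_mat dX dX. \<forall>B \<in> carrier_mat dX dX. N (A + B) = N A + N B) \<and>
     (\<forall>c. \<forall>A \<in> carrier_mat dX dX. N (c \<cdot>\<^sub>m A) = c \<cdot>\<^sub>m N A)"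

definition outer :: "complex vec \<Rightarrow> complex vec \<Rightarrow> complex mat" where
  "outer u v = mat (dim_vec u) (dim_vec v) (\<lambda>(i,j). u $ i * cnj (v $ j))"

definition density_matrix :: "nat \<Rightarrow> complex mat \<Rightarrow> bool" where
  "density_matrix d \<rho> \<longleftrightarrow> \<rho> \<in> carrier_mat d d \<and>
     (\<forall>v \<in> carrier_vec d. Im (conjugate v \<bullet> (\<rho> *\<^sub>v v)) = 0 \<and> 0 \<le> Re (conjugate v \<bullet> (\<rho> *\<^sub>v v))) \<and>
     (\<Sum>i<d. \<rho> $$ (i,i)) = 1"

definition ptrace1 :: "nat \<Rightarrow> nat \<Rightarrow> complex mat \<Rightarrow> complex mat" where
  "ptrace1 dA dB M = mat dB dB (\<lambda>(i,j). \<Sum>a<dA. M $$ (a*dB + i, a*dB + j))"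

definition ptranspose1 :: "nat \<Rightarrow> nat \<Rightarrow> complex mat \<Rightarrow> complex mat" where
  "ptranspose1 dA dB M = mat (dA*dB) (dA*dB)
     (\<lambda>(p,q). M $$ ((q div dB)*dB + p mod dB, (p div dB)*dB + q mod dB))"

text \<open>The map (I (x) N) applied to M \<in> L(C^dX (x) C^dX): blockwise application of N,
  i.e. (I (x) N)(\<Sum>ij |i><j| (x) M_ij) = \<Sum>ij |i><j| (x) N(M_ij).\<close>
definition block :: "nat \<Rightarrow> complex mat \<Rightarrow> nat \<Rightarrow> nat \<Rightarrow> complex mat" where
  "block d M i j = mat d d (\<lambda>(a,b). M $$ (i*d + a, j*d + b))"

definition id_tensor_map :: "nat \<Rightarrow> nat \<Rightarrow> (complex mat \<Rightarrow> complex mat) \<Rightarrow> complex mat \<Rightarrow> complex mat" where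
  "id_tensor_map dX dY N M = mat (dX*dY) (dX*dY)
     (\<lambda>(p,q). N (block dX M (p div dY) (q div dY)) $$ (p mod dY, q mod dY))"

text \<open>Unnormalised maximally entangled vector \<Sum>i |ii>.\<close>
definition phi_plus :: "nat \<Rightarrow> complex vec" where
  "phi_plus d = vec (d*d) (\<lambda>p. if p div d = p mod d then 1 else 0)"

definition choi :: "nat \<Rightarrow> nat \<Rightarrow> (complex mat \<Rightarrow> complex mat) \<Rightarrow> complex mat" where
  "choi dX dY N = id_tensor_map dX dY N (outer (phi_plus dX) (phi_plus dX))"

text \<open>M acting on A (x) C, extended by the identity on a middle register B:
  the resulting operator on A (x) B (x) C.\<close>
definition embed_mid :: "nat \<Rightarrow> nat \<Rightarrow> nat \<Rightarrow> complex mat \<Rightarrow> complex mat" where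
  "embed_mid dA dB dC M = mat (dA*dB*dC) (dA*dB*dC)
     (\<lambda>(p,q). let a = p div (dB*dC); b = (p div dC) mod dB; c = p mod dC;
                  a' = q div (dB*dC); b' = (q div dC) mod dB; c' = q mod dC
              in if b = b' then M $$ (a*dC + c, a'*dC + c') else 0)"

end

(* Write psi = U_rho |0> in C^(2^r) (x) C^(2^n) and psi_a for its slice at purifying index a,
   so that rho = sum_a psi_a psi_a^dagger.  Linearity of N and the definition of the Choi matrix
   give N(rho) = sum_a (psi_a^dagger (x) I) Lambda^T1 (psi_a (x) I).  As U_rho only acts on the
   r- and n-qubit registers and U_N ignores the r-qubit one, the top-left block of V is the same
   expression with Lambda^T1 replaced by the top-left block W of U_N.  Hence the error is
   (psi^dagger (x) I) (I (x) D) (psi (x) I) with D = Lambda^T1 - alpha W, whose norm is at most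
   the norm of D, i.e. at most eps, because psi is a unit vector. *)

theory Submission
  imports Defs "HOL-Analysis.L2_Norm"
begin

section \<open>Index arithmetic\<close>

lemma mult_add_less_mult:
  fixes i c :: nat assumes "i < N" "c < K" shows "i * K + c < N * K"
proof -
  have "i * K + c < (i + 1) * K" using assms by simp
  also have "\<dots> \<le> N * K" using assms by (intro mult_right_mono) auto
  finally show ?thesis .
qed

lemma sum_lessThan_mult:
  "(\<Sum>x < A * B. f x) = (\<Sum>a < A. \<Sum>b < (B::nat). f (a * B + b) :: 'a::comm_monoid_add)"
proof -
  have "(\<Sum>x\<in>{a * B..<a * B + B}. f x) = (\<Sum>b < B. f (a * B + b))" for a
    using sum.shift_bounds_nat_ivl[of f 0 "a * B" B] by (simp add: lessThan_atLeast0 add.commute)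
  then show ?thesis by (simp flip: sum.nat_group)
qed

lemma index3_cases:
  fixes i :: nat assumes "i < A * B * C"
  obtains x b z where "x < A" "b < B" "z < C" "i = (x * B + b) * C + z"
proof -
  have "C > 0" "B > 0" using assms by (auto intro!: Nat.gr0I)
  moreover have "i div C div B < A" using assms by (simp add: less_mult_imp_div_less)
  moreover have "i = ((i div C div B) * B + (i div C) mod B) * C + i mod C" by simp
  ultimately show thesis by (intro that[of "i div C div B" "(i div C) mod B" "i mod C"]) simp_all
qed

lemma index3_div_mod:
  fixes b z :: nat assumes "b < B" "z < C"
  shows "((x * B + b) * C + z) div C = x * B + b" "((x * B + b) * C + z) mod C = z"
    "((x * B + b) * C + z) div (B * C) = x" "((x * B + b) * C + z) div C mod B = b"
proof -
  have lt: "b * C + z < B * C" using assms by (rule mult_add_less_mult)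
  have "(x * B + b) * C + z = (b * C + z) + x * (B * C)" by (simp add: algebra_simps)
  also have "\<dots> div (B * C) = (b * C + z) div (B * C) + x"
    using lt by (simp only: div_mult_self1 add.commute)
  also have "(b * C + z) div (B * C) = 0" using lt by (rule div_less)
  finally show "((x * B + b) * C + z) div (B * C) = x" by simp
qed (use assms in auto)

lemma index_mult_mat_lessThan:
  "dim_col A = dim_row B \<Longrightarrow> i < dim_row A \<Longrightarrow> j < dim_col B \<Longrightarrow>
   (A * B) $$ (i, j) = (\<Sum>l < dim_row B. A $$ (i, l) * B $$ (l, j))"
  by (simp add: scalar_prod_def lessThan_atLeast0 row_def)

lemma index_mult_unit_vec:
  fixes A :: "'a::semiring_1 mat"
  assumes "A \<in> carrier_mat n d" "i < n" "j < d"
  shows "(A *\<^sub>v unit_vec d j) $ i = A $$ (i, j)"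
proof -
  have "(A *\<^sub>v unit_vec d j) $ i = row A i \<bullet> unit_vec d j" using assms by auto
  also have "\<dots> = row A i $ j" using assms by (intro scalar_prod_right_unit)
  also have "\<dots> = A $$ (i, j)" using assms by auto
  finally show ?thesis .
qed

section \<open>Adjoints, Kronecker products and unitaries\<close>

lemma dim_cadj [simp]: "dim_row (cadj A) = dim_col A" "dim_col (cadj A) = dim_row A"
  by (simp_all add: cadj_def)

lemma index_cadj [simp]: "i < dim_col A \<Longrightarrow> j < dim_row A \<Longrightarrow> cadj A $$ (i, j) = cnj (A $$ (j, i))"
  by (simp add: cadj_def)

lemma cadj_carrier_mat: "A \<in> carrier_mat a b \<Longrightarrow> cadj A \<in> carrier_mat b a"
  by auto

lemma cadj_one [simp]: "cadj (1\<^sub>m d) = 1\<^sub>m d"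
  by (rule eq_matI) auto

lemma cadj_cadj [simp]: "cadj (cadj A) = A"
  by (rule eq_matI) auto

lemma cadj_mult: "dim_col A = dim_row B \<Longrightarrow> cadj (A * B) = cadj B * cadj A"
  by (rule eq_matI)
    (auto simp del: index_mult_mat(1) simp add: index_mult_mat_lessThan cnj_sum mult.commute)

lemma dim_kron [simp]:
  "dim_row (kron A B) = dim_row A * dim_row B" "dim_col (kron A B) = dim_col A * dim_col B"
  by (simp_all add: kron_def)

lemma index_kron [simp]:
  "i < dim_row A * dim_row B \<Longrightarrow> j < dim_col A * dim_col B \<Longrightarrow>
   kron A B $$ (i, j) = A $$ (i div dim_row B, j div dim_col B) * B $$ (i mod dim_row B, j mod dim_col B)"
  by (simp add: kron_def)

lemma cadj_kron: "cadj (kron A B) = kron (cadj A) (cadj B)"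
proof (rule eq_matI)
  fix i j assume i: "i < dim_row (kron (cadj A) (cadj B))" and j: "j < dim_col (kron (cadj A) (cadj B))"
  then have "dim_col B > 0" "dim_row B > 0" by (auto intro!: Nat.gr0I)
  then show "cadj (kron A B) $$ (i, j) = kron (cadj A) (cadj B) $$ (i, j)"
    using i j by (simp add: less_mult_imp_div_less)
qed auto

lemma kron_mult:
  assumes "dim_col A = dim_row C" "dim_col B = dim_row D"
  shows "kron A B * kron C D = kron (A * C) (B * D)"
proof (rule eq_matI)
  fix i j assume i: "i < dim_row (kron (A * C) (B * D))" and j: "j < dim_col (kron (A * C) (B * D))"
  then have "dim_col D > 0" "dim_row B > 0" by (auto intro!: Nat.gr0I)
  then have ij: "i div dim_row B < dim_row A" "i mod dim_row B < dim_row B"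
    "j div dim_col D < dim_col C" "j mod dim_col D < dim_col D"
    using i j by (auto simp: less_mult_imp_div_less)
  have "(kron A B * kron C D) $$ (i, j) =
      (\<Sum>l < dim_row C * dim_row D. kron A B $$ (i, l) * kron C D $$ (l, j))"
    using i j assms by (simp del: index_mult_mat(1) index_kron add: index_mult_mat_lessThan)
  also have "\<dots> = (\<Sum>x < dim_row C. \<Sum>y < dim_row D.
      kron A B $$ (i, x * dim_row D + y) * kron C D $$ (x * dim_row D + y, j))"
    by (rule sum_lessThan_mult)
  also have "\<dots> = (\<Sum>x < dim_row C. \<Sum>y < dim_row D.
      (A $$ (i div dim_row B, x) * C $$ (x, j div dim_col D)) *
      (B $$ (i mod dim_row B, y) * D $$ (y, j mod dim_col D)))"
    using i j assms by (intro sum.cong refl) (simp add: mult_add_less_mult mult_ac)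
  also have "\<dots> = (A * C) $$ (i div dim_row B, j div dim_col D) * (B * D) $$ (i mod dim_row B, j mod dim_col D)"
    using ij assms by (simp del: index_mult_mat(1) add: index_mult_mat_lessThan sum_product)
  finally show "(kron A B * kron C D) $$ (i, j) = kron (A * C) (B * D) $$ (i, j)"
    using i j by simp
qed (use assms in auto)

lemma kron_one: "kron (1\<^sub>m a) (1\<^sub>m b) = 1\<^sub>m (a * b)"
proof (rule eq_matI)
  fix i j assume i: "i < dim_row (1\<^sub>m (a * b))" and j: "j < dim_col (1\<^sub>m (a * b))"
  then have "b > 0" by (auto intro!: Nat.gr0I)
  moreover have "(i div b = j div b \<and> i mod b = j mod b) = (i = j)"
    by (metis div_mult_mod_eq)
  ultimately show "kron (1\<^sub>m a) (1\<^sub>m b) $$ (i, j) = 1\<^sub>m (a * b) $$ (i, j)"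
    using i j by (auto simp: less_mult_imp_div_less)
qed auto

lemma unitary_one: "unitary d (1\<^sub>m d)"
  unfolding unitary_def by auto

lemma unitary_cadj: "unitary d U \<Longrightarrow> unitary d (cadj U)"
  unfolding unitary_def by auto

lemma unitary_kron: "unitary a A \<Longrightarrow> unitary b B \<Longrightarrow> unitary (a * b) (kron A B)"
  unfolding unitary_def by (auto simp: cadj_kron kron_mult kron_one)

lemma unitary_mult:
  assumes "unitary d A" "unitary d B" shows "unitary d (A * B)"
proof -
  have A: "A \<in> carrier_mat d d" "cadj A \<in> carrier_mat d d"
    and B: "B \<in> carrier_mat d d" "cadj B \<in> carrier_mat d d"
    using assms unfolding unitary_def by auto
  have "cadj (A * B) * (A * B) = cadj B * (cadj A * A) * B"
    using A B by (simp add: cadj_mult assoc_mult_mat[of _ d d _ d _ d])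
  moreover have "(A * B) * cadj (A * B) = A * (B * cadj B) * cadj A"
    using A B by (simp add: cadj_mult assoc_mult_mat[of _ d d _ d _ d])
  ultimately show ?thesis using assms A B unfolding unitary_def by simp
qed

section \<open>Operators acting on the outer registers\<close>

lemma dim_embed_mid [simp]:
  "dim_row (embed_mid A B C W) = A * B * C" "dim_col (embed_mid A B C W) = A * B * C"
  by (simp_all add: embed_mid_def)

lemma index_embed_mid:
  assumes "x < A" "y < A" "b < B" "b' < B" "z < C" "z' < C"
  shows "embed_mid A B C W $$ ((x * B + b) * C + z, (y * B + b') * C + z') =
    (if b = b' then W $$ (x * C + z, y * C + z') else 0)"
proof -
  have "(x * B + b) * C + z < A * B * C" "(y * B + b') * C + z' < A * B * C"
    using assms by (auto intro!: mult_add_less_mult)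
  then show ?thesis using assms unfolding embed_mid_def by (simp add: index3_div_mod Let_def)
qed

lemma embed_mid_mult:
  assumes "W \<in> carrier_mat (A * C) (A * C)" "W' \<in> carrier_mat (A * C) (A * C)"
  shows "embed_mid A B C W * embed_mid A B C W' = embed_mid A B C (W * W')"
proof (rule eq_matI)
  let ?E = "embed_mid A B C W" and ?E' = "embed_mid A B C W'"
  fix i j assume "i < dim_row (embed_mid A B C (W * W'))" "j < dim_col (embed_mid A B C (W * W'))"
  then obtain x b z y b' z' where i: "x < A" "b < B" "z < C" "i = (x * B + b) * C + z"
    and j: "y < A" "b' < B" "z' < C" "j = (y * B + b') * C + z'"
    by (metis dim_embed_mid index3_cases)
  have "(?E * ?E') $$ (i, j) = (\<Sum>l < A * B * C. ?E $$ (i, l) * ?E' $$ (l, j))"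
    using i j by (simp del: index_mult_mat(1) add: index_mult_mat_lessThan mult_add_less_mult)
  also have "\<dots> = (\<Sum>x' < A. \<Sum>b'' < B. \<Sum>z'' < C.
      ?E $$ (i, (x' * B + b'') * C + z'') * ?E' $$ ((x' * B + b'') * C + z'', j))"
    by (simp add: sum_lessThan_mult)
  also have "\<dots> = (\<Sum>x' < A. \<Sum>b'' < B. \<Sum>z'' < C.
      (if b'' = b \<and> b = b' then W $$ (x * C + z, x' * C + z'') * W' $$ (x' * C + z'', y * C + z') else 0))"
    using i j by (intro sum.cong refl) (simp add: index_embed_mid)
  also have "\<dots> = (if b = b' then (\<Sum>x' < A. \<Sum>z'' < C.
      W $$ (x * C + z, x' * C + z'') * W' $$ (x' * C + z'', y * C + z')) else 0)"
    using i j by (cases "b = b'") (simp_all add: sum.swap[where A = "{..<B}"])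
  also have "\<dots> = (if b = b' then (W * W') $$ (x * C + z, y * C + z') else 0)"
    using i j assms
    by (simp del: index_mult_mat(1) add: index_mult_mat_lessThan mult_add_less_mult sum_lessThan_mult)
  also have "\<dots> = embed_mid A B C (W * W') $$ (i, j)"
    using i j by (simp add: index_embed_mid)
  finally show "(?E * ?E') $$ (i, j) = embed_mid A B C (W * W') $$ (i, j)" .
qed auto

lemma embed_mid_one: "embed_mid A B C (1\<^sub>m (A * C)) = 1\<^sub>m (A * B * C)"
proof (rule eq_matI)
  fix i j assume "i < dim_row (1\<^sub>m (A * B * C))" "j < dim_col (1\<^sub>m (A * B * C))"
  then obtain x b z y b' z' where i: "x < A" "b < B" "z < C" "i = (x * B + b) * C + z"
    and j: "y < A" "b' < B" "z' < C" "j = (y * B + b') * C + z'"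
    by (metis index_one_mat(2,3) index3_cases)
  have "(x * C + z = y * C + z') = (x = y \<and> z = z')" "(i = j) = (x = y \<and> b = b' \<and> z = z')"
    using i j by (metis index3_div_mod)+
  moreover have "x * C + z < A * C" "y * C + z' < A * C" "i < A * B * C" "j < A * B * C"
    using i j by (auto intro!: mult_add_less_mult)
  ultimately show "embed_mid A B C (1\<^sub>m (A * C)) $$ (i, j) = 1\<^sub>m (A * B * C) $$ (i, j)"
    using i j by (simp add: index_embed_mid)
qed auto

lemma cadj_embed_mid:
  assumes "W \<in> carrier_mat (A * C) (A * C)"
  shows "cadj (embed_mid A B C W) = embed_mid A B C (cadj W)"
proof (rule eq_matI)
  fix i j assume "i < dim_row (embed_mid A B C (cadj W))" "j < dim_col (embed_mid A B C (cadj W))"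
  then obtain x b z y b' z' where i: "x < A" "b < B" "z < C" "i = (x * B + b) * C + z"
    and j: "y < A" "b' < B" "z' < C" "j = (y * B + b') * C + z'"
    by (metis dim_embed_mid index3_cases)
  have "x * C + z < A * C" "y * C + z' < A * C" "i < A * B * C" "j < A * B * C"
    using i j by (auto intro!: mult_add_less_mult)
  then show "cadj (embed_mid A B C W) $$ (i, j) = embed_mid A B C (cadj W) $$ (i, j)"
    using i j assms by (auto simp: index_embed_mid)
qed auto

lemma unitary_embed_mid: "unitary (A * C) W \<Longrightarrow> unitary (A * B * C) (embed_mid A B C W)"
  unfolding unitary_def by (auto simp: cadj_embed_mid embed_mid_mult embed_mid_one cadj_carrier_mat)

lemma unitary_conj_embed_mid:
  assumes U: "unitary (R * N) U" and W: "unitary (M * (N * K)) W"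
  shows "unitary (M * R * N * K)
    (kron (kron (1\<^sub>m M) (cadj U)) (1\<^sub>m K) * embed_mid M R (N * K) W * kron (kron (1\<^sub>m M) U) (1\<^sub>m K))"
proof -
  let ?R = "kron (kron (1\<^sub>m M) U) (1\<^sub>m K)"
  have "unitary (M * (R * N) * K) ?R" by (intro unitary_kron unitary_one U)
  moreover have "unitary (M * R * (N * K)) (embed_mid M R (N * K) W)" using W by (rule unitary_embed_mid)
  moreover have "kron (kron (1\<^sub>m M) (cadj U)) (1\<^sub>m K) = cadj ?R" by (simp add: cadj_kron)
  ultimately show ?thesis by (simp add: unitary_mult unitary_cadj mult_ac)
qed

section \<open>Encoded blocks\<close>

lemma dim_ket0 [simp]: "dim_row (ket0 p) = 2^p" "dim_col (ket0 p) = 1"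
  by (simp_all add: ket0_def)

lemma dim_bra0 [simp]: "dim_row (bra0 p) = 1" "dim_col (bra0 p) = 2^p"
  by (simp_all add: bra0_def)

definition encoded_block :: "nat \<Rightarrow> nat \<Rightarrow> complex mat \<Rightarrow> complex mat" where
  "encoded_block p d Q = kron (bra0 p) (1\<^sub>m d) * Q * kron (ket0 p) (1\<^sub>m d)"

lemma block_encoding_iff:
  "block_encoding \<alpha> m n \<epsilon> A U \<longleftrightarrow>
     0 \<le> \<alpha> \<and> 0 \<le> \<epsilon> \<and> A \<in> carrier_mat (2^n) (2^n) \<and> unitary (2^(m+n)) U \<and>
     op_norm (A - complex_of_real \<alpha> \<cdot>\<^sub>m encoded_block m (2^n) U) \<le> \<epsilon>"
  unfolding block_encoding_def encoded_block_def ..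

lemma encoded_block_carrier: "encoded_block p d Q \<in> carrier_mat d d"
  unfolding encoded_block_def carrier_mat_def by simp

lemma index_kron_ket0_one:
  assumes "c < d" "l < 2^p * d"
  shows "kron (ket0 p) (1\<^sub>m d) $$ (l, c) = (if l = c then 1 else 0)"
proof -
  have "l div d < 2^p" using assms by (simp add: less_mult_imp_div_less)
  then show ?thesis using assms by (cases "l = c") (auto simp: ket0_def div_eq_0_iff)
qed

lemma index_kron_bra0_one:
  assumes "c < d" "l < 2^p * d"
  shows "kron (bra0 p) (1\<^sub>m d) $$ (c, l) = (if l = c then 1 else 0)"
proof -
  have "l div d < 2^p" using assms by (simp add: less_mult_imp_div_less)
  then show ?thesis using assms by (cases "l = c") (auto simp: bra0_def div_eq_0_iff)
qed

lemma index_encoded_block: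
  assumes Q: "Q \<in> carrier_mat (2^p * d) (2^p * d)" and c: "c < d" "c' < d"
  shows "encoded_block p d Q $$ (c, c') = Q $$ (c, c')"
proof -
  let ?B = "kron (bra0 p) (1\<^sub>m d)" and ?K = "kron (ket0 p) (1\<^sub>m d)"
  have cl: "c < 2^p * d" "c' < 2^p * d" using c by (auto intro: less_le_trans)
  have "encoded_block p d Q $$ (c, c') = (\<Sum>l < 2^p * d. (?B * Q) $$ (c, l) * ?K $$ (l, c'))"
    using Q c unfolding encoded_block_def by (simp del: index_mult_mat(1) add: index_mult_mat_lessThan)
  also have "\<dots> = (\<Sum>l < 2^p * d. if l = c' then (?B * Q) $$ (c, l) else 0)"
    using c by (intro sum.cong refl) (simp del: index_kron add: index_kron_ket0_one)
  also have "\<dots> = (\<Sum>l < 2^p * d. ?B $$ (c, l) * Q $$ (l, c'))"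
    using Q c cl by (simp del: index_mult_mat(1) add: index_mult_mat_lessThan)
  also have "\<dots> = (\<Sum>l < 2^p * d. if l = c then Q $$ (l, c') else 0)"
    using c by (intro sum.cong refl) (simp del: index_kron add: index_kron_bra0_one)
  also have "\<dots> = Q $$ (c, c')" using cl by (simp add: sum.delta')
  finally show ?thesis .
qed

section \<open>Sandwiching with a bipartite vector\<close>

text \<open>For \<open>\<psi> \<in> \<complex>\<^sup>R \<otimes> \<complex>\<^sup>N\<close> and an operator \<open>D\<close> on \<open>\<complex>\<^sup>N \<otimes> \<complex>\<^sup>K\<close>, this is
  \<open>(\<langle>\<psi>| \<otimes> I\<^sub>K) (I\<^sub>R \<otimes> D) (|\<psi>\<rangle> \<otimes> I\<^sub>K)\<close>, an operator on \<open>\<complex>\<^sup>K\<close>.\<close>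
definition vec_sandwich :: "nat \<Rightarrow> nat \<Rightarrow> nat \<Rightarrow> complex vec \<Rightarrow> complex mat \<Rightarrow> complex mat" where
  "vec_sandwich R N K \<psi> D = mat K K (\<lambda>(c, c').
     \<Sum>a < R. \<Sum>i < N. \<Sum>j < N. cnj (\<psi> $ (a * N + i)) * \<psi> $ (a * N + j) * D $$ (i * K + c, j * K + c'))"

lemma vec_sandwich_diff:
  assumes "A \<in> carrier_mat (N * K) (N * K)" "B \<in> carrier_mat (N * K) (N * K)"
  shows "vec_sandwich R N K \<psi> A - x \<cdot>\<^sub>m vec_sandwich R N K \<psi> B = vec_sandwich R N K \<psi> (A - x \<cdot>\<^sub>m B)"
proof (rule eq_matI)
  let ?S = "vec_sandwich R N K \<psi>"
  fix c c' assume "c < dim_row (?S (A - x \<cdot>\<^sub>m B))" "c' < dim_col (?S (A - x \<cdot>\<^sub>m B))"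
  then have c: "c < K" "c' < K" by (simp_all add: vec_sandwich_def)
  have "(A - x \<cdot>\<^sub>m B) $$ (i * K + c, j * K + c') =
      A $$ (i * K + c, j * K + c') - x * B $$ (i * K + c, j * K + c')" if "i < N" "j < N" for i j
    using that c assms by (simp add: mult_add_less_mult)
  then show "(?S A - x \<cdot>\<^sub>m ?S B) $$ (c, c') = ?S (A - x \<cdot>\<^sub>m B) $$ (c, c')"
    using c by (simp add: vec_sandwich_def sum_subtractf sum_distrib_left right_diff_distrib mult_ac)
qed (simp_all add: vec_sandwich_def)

lemma index_mult_kron_mid_col:
  assumes F: "dim_col F = M * S * K" "i < dim_row F" and c': "c' < K"
    and U: "U \<in> carrier_mat S S" and pos: "0 < M" "0 < S"
  shows "(F * kron (kron (1\<^sub>m M) U) (1\<^sub>m K)) $$ (i, c') = (\<Sum>s < S. F $$ (i, s * K + c') * U $$ (s, 0))"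
proof -
  let ?R = "kron (kron (1\<^sub>m M) U) (1\<^sub>m K)"
  have "c' < M * S * K" using c' pos by (simp add: less_le_trans)
  then have "(F * ?R) $$ (i, c') = (\<Sum>q < M * S * K. F $$ (i, q) * ?R $$ (q, c'))"
    using F carrier_matD[OF U] by (simp del: index_mult_mat(1) index_kron add: index_mult_mat_lessThan)
  also have "\<dots> = (\<Sum>u < M. \<Sum>s < S. \<Sum>d < K. F $$ (i, (u * S + s) * K + d) * ?R $$ ((u * S + s) * K + d, c'))"
    by (simp del: index_kron add: sum_lessThan_mult)
  also have "\<dots> = (\<Sum>u < M. \<Sum>s < S. \<Sum>d < K.
      if d = c' then (if u = 0 then F $$ (i, s * K + c') * U $$ (s, 0) else 0) else 0)"
  proof (intro sum.cong refl)
    fix u s d assume "u \<in> {..<M}" "s \<in> {..<S}" "d \<in> {..<K}"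
    then have "u * S + s < M * S" "u < M" "s < S" "d < K" by (auto intro: mult_add_less_mult)
    then show "F $$ (i, (u * S + s) * K + d) * ?R $$ ((u * S + s) * K + d, c') =
      (if d = c' then (if u = 0 then F $$ (i, s * K + c') * U $$ (s, 0) else 0) else 0)"
      using c' U pos \<open>c' < M * S * K\<close> by (auto simp: index3_div_mod mult_add_less_mult)
  qed
  also have "\<dots> = (\<Sum>s < S. F $$ (i, s * K + c') * U $$ (s, 0))"
    using c' pos by (simp add: sum.swap[where A = "{..<M}"] sum.delta)
  finally show ?thesis .
qed

lemma index_kron_mid_mult_row:
  assumes F: "dim_row F = M * S * K" "j < dim_col F" and c: "c < K"
    and U: "U \<in> carrier_mat S S" and pos: "0 < M" "0 < S"
  shows "(kron (kron (1\<^sub>m M) (cadj U)) (1\<^sub>m K) * F) $$ (c, j) = (\<Sum>s < S. cnj (U $$ (s, 0)) * F $$ (s * K + c, j))"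
proof -
  let ?L = "kron (kron (1\<^sub>m M) (cadj U)) (1\<^sub>m K)"
  have "c < M * S * K" using c pos by (simp add: less_le_trans)
  then have "(?L * F) $$ (c, j) = (\<Sum>q < M * S * K. ?L $$ (c, q) * F $$ (q, j))"
    using F carrier_matD[OF U] by (simp del: index_mult_mat(1) index_kron add: index_mult_mat_lessThan)
  also have "\<dots> = (\<Sum>u < M. \<Sum>s < S. \<Sum>d < K. ?L $$ (c, (u * S + s) * K + d) * F $$ ((u * S + s) * K + d, j))"
    by (simp del: index_kron add: sum_lessThan_mult)
  also have "\<dots> = (\<Sum>u < M. \<Sum>s < S. \<Sum>d < K.
      if d = c then (if u = 0 then cnj (U $$ (s, 0)) * F $$ (s * K + c, j) else 0) else 0)"
  proof (intro sum.cong refl)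
    fix u s d assume "u \<in> {..<M}" "s \<in> {..<S}" "d \<in> {..<K}"
    then have "u * S + s < M * S" "u < M" "s < S" "d < K" by (auto intro: mult_add_less_mult)
    then show "?L $$ (c, (u * S + s) * K + d) * F $$ ((u * S + s) * K + d, j) =
      (if d = c then (if u = 0 then cnj (U $$ (s, 0)) * F $$ (s * K + c, j) else 0) else 0)"
      using c U pos \<open>c < M * S * K\<close> by (auto simp: index3_div_mod mult_add_less_mult)
  qed
  also have "\<dots> = (\<Sum>s < S. cnj (U $$ (s, 0)) * F $$ (s * K + c, j))"
    using c pos by (simp add: sum.swap[where A = "{..<M}"] sum.delta)
  finally show ?thesis .
qed

lemma index_embed_mid_first_block:
  assumes "0 < M" "a < R" "b < R" "i < N" "j < N" "c < K" "c' < K"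
  shows "embed_mid M R (N * K) W $$ ((a * N + i) * K + c, (b * N + j) * K + c') =
    (if a = b then W $$ (i * K + c, j * K + c') else 0)"
proof -
  have "(a * N + i) * K + c = (0 * R + a) * (N * K) + (i * K + c)"
    "(b * N + j) * K + c' = (0 * R + b) * (N * K) + (j * K + c')"
    by (simp_all add: algebra_simps)
  moreover have "embed_mid M R (N * K) W $$ ((0 * R + a) * (N * K) + (i * K + c), (0 * R + b) * (N * K) + (j * K + c')) =
      (if a = b then W $$ (0 * (N * K) + (i * K + c), 0 * (N * K) + (j * K + c')) else 0)"
    using assms by (intro index_embed_mid) (auto intro: mult_add_less_mult)
  ultimately show ?thesis by (simp only: mult_zero_left add_0)
qed

lemma index_conj_embed_mid:
  assumes U: "U \<in> carrier_mat (R * N) (R * N)" and pos: "0 < M" "0 < R" "0 < N" "0 < K"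
    and c: "c < K" "c' < K"
  shows "(kron (kron (1\<^sub>m M) (cadj U)) (1\<^sub>m K) * embed_mid M R (N * K) W * kron (kron (1\<^sub>m M) U) (1\<^sub>m K)) $$ (c, c')
    = vec_sandwich R N K (U *\<^sub>v unit_vec (R * N) 0) W $$ (c, c')"
proof -
  let ?L = "kron (kron (1\<^sub>m M) (cadj U)) (1\<^sub>m K)" and ?E = "embed_mid M R (N * K) W"
  let ?w = "\<lambda>a i j. cnj (U $$ (a * N + i, 0)) * U $$ (a * N + j, 0)"
  have RN: "0 < R * N" using pos by simp
  have dims: "dim_row ?E = M * (R * N) * K" "dim_col (?L * ?E) = M * (R * N) * K" "c < dim_row (?L * ?E)"
    using c pos carrier_matD[OF U] by (auto simp: mult_ac less_le_trans)
  have col: "t * K + c' < dim_col ?E" if "t < R * N" for t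
  proof -
    have "t * K + c' < R * N * K" using that c by (intro mult_add_less_mult)
    also have "\<dots> \<le> M * R * (N * K)" using pos by (simp add: mult_ac)
    finally show ?thesis by simp
  qed
  have "(?L * ?E * kron (kron (1\<^sub>m M) U) (1\<^sub>m K)) $$ (c, c') =
      (\<Sum>t < R * N. (?L * ?E) $$ (c, t * K + c') * U $$ (t, 0))"
    using dims U c pos RN by (intro index_mult_kron_mid_col) auto
  also have "\<dots> = (\<Sum>t < R * N. \<Sum>s < R * N. cnj (U $$ (s, 0)) * U $$ (t, 0) * ?E $$ (s * K + c, t * K + c'))"
  proof (intro sum.cong refl)
    fix t assume "t \<in> {..<R * N}"
    then have "(?L * ?E) $$ (c, t * K + c') = (\<Sum>s < R * N. cnj (U $$ (s, 0)) * ?E $$ (s * K + c, t * K + c'))"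
      using dims U c pos RN col by (intro index_kron_mid_mult_row) auto
    then show "(?L * ?E) $$ (c, t * K + c') * U $$ (t, 0) =
        (\<Sum>s < R * N. cnj (U $$ (s, 0)) * U $$ (t, 0) * ?E $$ (s * K + c, t * K + c'))"
      by (simp add: sum_distrib_left sum_distrib_right mult_ac)
  qed
  also have "\<dots> = (\<Sum>s < R * N. \<Sum>t < R * N. cnj (U $$ (s, 0)) * U $$ (t, 0) * ?E $$ (s * K + c, t * K + c'))"
    by (rule sum.swap)
  also have "\<dots> = (\<Sum>a < R. \<Sum>i < N. \<Sum>b < R. \<Sum>j < N.
      if b = a then ?w a i j * W $$ (i * K + c, j * K + c') else 0)"
    (is "_ = (\<Sum>a < R. \<Sum>i < N. \<Sum>b < R. \<Sum>j < N. ?g a i b j)")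
  proof -
    have "?g a i b j = cnj (U $$ (a * N + i, 0)) * U $$ (b * N + j, 0) *
        ?E $$ ((a * N + i) * K + c, (b * N + j) * K + c')"
      if "a < R" "i < N" "b < R" "j < N" for a i b j
      using that pos c by (simp add: index_embed_mid_first_block)
    then show ?thesis by (simp only: sum_lessThan_mult) (intro sum.cong refl; simp)
  qed
  also have "\<dots> = (\<Sum>a < R. \<Sum>i < N. \<Sum>j < N. ?w a i j * W $$ (i * K + c, j * K + c'))"
  proof (rule sum.cong[OF refl], rule sum.cong[OF refl])
    fix a i assume "a \<in> {..<R}"
    then show "(\<Sum>b < R. \<Sum>j < N. ?g a i b j) = (\<Sum>j < N. ?w a i j * W $$ (i * K + c, j * K + c'))"
      by (subst sum.swap) simp
  qed
  also have "\<dots> = vec_sandwich R N K (U *\<^sub>v unit_vec (R * N) 0) W $$ (c, c')"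
    using U c pos by (simp add: vec_sandwich_def index_mult_unit_vec mult_add_less_mult)
  finally show ?thesis .
qed

lemma encoded_block_conj_embed_mid:
  assumes U: "U \<in> carrier_mat (2^(r+n)) (2^(r+n))"
    and W: "W \<in> carrier_mat (2^(m+(n+k))) (2^(m+(n+k)))"
  shows "encoded_block (m+r+n) (2^k)
      (kron (kron (1\<^sub>m (2^m)) (cadj U)) (1\<^sub>m (2^k)) * embed_mid (2^m) (2^r) (2^(n+k)) W
        * kron (kron (1\<^sub>m (2^m)) U) (1\<^sub>m (2^k)))
    = vec_sandwich (2^r) (2^n) (2^k) (U *\<^sub>v unit_vec (2^(r+n)) 0) (encoded_block m (2^(n+k)) W)"
    (is "encoded_block _ _ ?V = _")
proof (rule eq_matI)
  have e: "(2::nat)^(r+n) = 2^r * 2^n" "(2::nat)^(n+k) = 2^n * 2^k" "(2::nat)^(m+(n+k)) = 2^m * 2^(n+k)"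
    "(2::nat)^m * 2^(r+n) * 2^k = 2^(m+r+n) * 2^k"
    by (simp_all add: power_add)
  have U': "U \<in> carrier_mat (2^r * 2^n) (2^r * 2^n)" and W': "W \<in> carrier_mat (2^m * 2^(n+k)) (2^m * 2^(n+k))"
    using U W unfolding e by simp_all
  have V: "?V \<in> carrier_mat (2^(m+r+n) * 2^k) (2^(m+r+n) * 2^k)"
    using carrier_matD[OF U] e(4) by (intro carrier_matI) simp_all
  fix c c' assume "c < dim_row (vec_sandwich (2^r) (2^n) (2^k) (U *\<^sub>v unit_vec (2^(r+n)) 0) (encoded_block m (2^(n+k)) W))"
    "c' < dim_col (vec_sandwich (2^r) (2^n) (2^k) (U *\<^sub>v unit_vec (2^(r+n)) 0) (encoded_block m (2^(n+k)) W))"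
  then have c: "c < 2^k" "c' < 2^k" by (simp_all add: vec_sandwich_def)
  have "encoded_block (m+r+n) (2^k) ?V $$ (c, c') = ?V $$ (c, c')"
    using V c by (rule index_encoded_block)
  also have "\<dots> = vec_sandwich (2^r) (2^n) (2^k) (U *\<^sub>v unit_vec (2^(r+n)) 0) W $$ (c, c')"
    unfolding e(1,2) by (rule index_conj_embed_mid[OF U' _ _ _ _ c]) simp_all
  also have "\<dots> = vec_sandwich (2^r) (2^n) (2^k) (U *\<^sub>v unit_vec (2^(r+n)) 0) (encoded_block m (2^(n+k)) W) $$ (c, c')"
  proof -
    have "W $$ (i * 2^k + c, j * 2^k + c') = encoded_block m (2^(n+k)) W $$ (i * 2^k + c, j * 2^k + c')"
      if "i < 2^n" "j < 2^n" for i j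
      using that c e(2) by (intro index_encoded_block[symmetric, OF W']) (auto intro: mult_add_less_mult)
    then show ?thesis using c by (simp add: vec_sandwich_def)
  qed
  finally show "encoded_block (m+r+n) (2^k) ?V $$ (c, c') = \<dots>" .
qed (simp_all add: vec_sandwich_def carrier_matD[OF encoded_block_carrier])

section \<open>Linear maps and the Choi matrix\<close>

definition matrix_unit :: "nat \<Rightarrow> nat \<Rightarrow> nat \<Rightarrow> complex mat" where
  "matrix_unit d i j = mat d d (\<lambda>(a, b). if a = i \<and> b = j then 1 else 0)"

lemma lin_map_index_expand:
  assumes N: "lin_map dX dY N" and A: "A \<in> carrier_mat dX dX" and c: "c < dY" "c' < dY"
  shows "N A $$ (c, c') = (\<Sum>i < dX. \<Sum>j < dX. A $$ (i, j) * N (matrix_unit dX i j) $$ (c, c'))"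
proof -
  define part where "part S = mat dX dX (\<lambda>(i, j). if (i, j) \<in> S then A $$ (i, j) else 0)" for S
  have part: "N (part S) $$ (c, c') = (\<Sum>x \<in> S. A $$ x * N (matrix_unit dX (fst x) (snd x)) $$ (c, c'))"
    if "finite S" for S
    using that
  proof (induction S rule: finite_induct)
    case empty
    have "part {} = 0 \<cdot>\<^sub>m A" using A by (intro eq_matI) (auto simp: part_def)
    then have "N (part {}) = 0 \<cdot>\<^sub>m N A" using N A unfolding lin_map_def by simp
    moreover have "N A \<in> carrier_mat dY dY" using N A unfolding lin_map_def by simp
    ultimately show ?case using c by simp
  next
    case (insert x S)
    obtain i j where x: "x = (i, j)" by (cases x)
    have carrier: "part S \<in> carrier_mat dX dX" "A $$ (i, j) \<cdot>\<^sub>m matrix_unit dX i j \<in> carrier_mat dX dX"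
      by (auto simp: part_def matrix_unit_def)
    have "part (insert x S) = part S + A $$ (i, j) \<cdot>\<^sub>m matrix_unit dX i j"
      using insert x by (intro eq_matI) (auto simp: part_def matrix_unit_def)
    then have "N (part (insert x S)) = N (part S) + A $$ (i, j) \<cdot>\<^sub>m N (matrix_unit dX i j)"
      using N carrier unfolding lin_map_def by (simp add: matrix_unit_def)
    moreover have "N (part S) \<in> carrier_mat dY dY" "N (matrix_unit dX i j) \<in> carrier_mat dY dY"
      using N carrier unfolding lin_map_def by (auto simp: matrix_unit_def)
    ultimately show ?case using insert c x by simp
  qed
  have "part ({..<dX} \<times> {..<dX}) = A" using A by (intro eq_matI) (auto simp: part_def)
  then show ?thesis using part[of "{..<dX} \<times> {..<dX}"] by (simp add: sum.cartesian_product split_beta)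
qed

lemma index_ptranspose1_choi:
  assumes "i < dX" "j < dX" "c < dY" "c' < dY"
  shows "ptranspose1 dX dY (choi dX dY N) $$ (i * dY + c, j * dY + c') = N (matrix_unit dX j i) $$ (c, c')"
proof -
  have "block dX (outer (phi_plus dX) (phi_plus dX)) j i = matrix_unit dX j i"
  proof (rule eq_matI)
    fix a b assume ab: "a < dim_row (matrix_unit dX j i)" "b < dim_col (matrix_unit dX j i)"
    then have "j * dX + a < dX * dX" "i * dX + b < dX * dX"
      using assms by (auto simp: matrix_unit_def intro!: mult_add_less_mult)
    then show "block dX (outer (phi_plus dX) (phi_plus dX)) j i $$ (a, b) = matrix_unit dX j i $$ (a, b)"
      using ab by (auto simp: block_def outer_def phi_plus_def matrix_unit_def)
  qed (auto simp: block_def matrix_unit_def)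
  moreover have "i * dY + c < dX * dY" "j * dY + c' < dX * dY" "j * dY + c < dX * dY" "i * dY + c' < dX * dY"
    using assms by (auto intro!: mult_add_less_mult)
  ultimately show ?thesis using assms by (simp add: ptranspose1_def choi_def id_tensor_map_def)
qed

lemma lin_map_ptrace1_outer:
  assumes N: "lin_map dX dY N" and \<psi>: "\<psi> \<in> carrier_vec (R * dX)"
  shows "N (ptrace1 R dX (outer \<psi> \<psi>)) = vec_sandwich R dX dY \<psi> (ptranspose1 dX dY (choi dX dY N))"
proof (rule eq_matI)
  let ?\<rho> = "ptrace1 R dX (outer \<psi> \<psi>)" and ?\<Lambda> = "ptranspose1 dX dY (choi dX dY N)"
  have \<rho>: "?\<rho> \<in> carrier_mat dX dX" by (simp add: ptrace1_def)
  have \<rho>_entry: "?\<rho> $$ (i, j) = (\<Sum>a < R. \<psi> $ (a * dX + i) * cnj (\<psi> $ (a * dX + j)))"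
    if "i < dX" "j < dX" for i j
    using that \<psi> by (simp add: ptrace1_def outer_def mult_add_less_mult)
  fix c c' assume "c < dim_row (vec_sandwich R dX dY \<psi> ?\<Lambda>)" "c' < dim_col (vec_sandwich R dX dY \<psi> ?\<Lambda>)"
  then have c: "c < dY" "c' < dY" by (simp_all add: vec_sandwich_def)
  let ?f = "\<lambda>a i j. cnj (\<psi> $ (a * dX + j)) * \<psi> $ (a * dX + i) * N (matrix_unit dX i j) $$ (c, c')"
  have "N ?\<rho> $$ (c, c') = (\<Sum>i < dX. \<Sum>j < dX. ?\<rho> $$ (i, j) * N (matrix_unit dX i j) $$ (c, c'))"
    by (rule lin_map_index_expand[OF N \<rho> c])
  also have "\<dots> = (\<Sum>i < dX. \<Sum>j < dX. \<Sum>a < R. ?f a i j)"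
    by (simp add: \<rho>_entry sum_distrib_left sum_distrib_right mult_ac)
  also have "\<dots> = (\<Sum>i < dX. \<Sum>a < R. \<Sum>j < dX. ?f a i j)"
    by (rule sum.cong[OF refl], rule sum.swap)
  also have "\<dots> = (\<Sum>a < R. \<Sum>i < dX. \<Sum>j < dX. ?f a i j)"
    by (rule sum.swap)
  also have "\<dots> = (\<Sum>a < R. \<Sum>j < dX. \<Sum>i < dX. ?f a i j)"
    by (rule sum.cong[OF refl], rule sum.swap)
  also have "\<dots> = vec_sandwich R dX dY \<psi> ?\<Lambda> $$ (c, c')"
    using c by (simp add: vec_sandwich_def index_ptranspose1_choi)
  finally show "N ?\<rho> $$ (c, c') = vec_sandwich R dX dY \<psi> ?\<Lambda> $$ (c, c')" .
next
  show "dim_row (N (ptrace1 R dX (outer \<psi> \<psi>))) = dim_row (vec_sandwich R dX dY \<psi> (ptranspose1 dX dY (choi dX dY N)))"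
    "dim_col (N (ptrace1 R dX (outer \<psi> \<psi>))) = dim_col (vec_sandwich R dX dY \<psi> (ptranspose1 dX dY (choi dX dY N)))"
    using N unfolding lin_map_def by (auto simp: ptrace1_def vec_sandwich_def)
qed

section \<open>Norm bounds\<close>

lemma vnorm_nonneg: "0 \<le> vnorm v"
  unfolding vnorm_def by (simp add: sum_nonneg)

lemma vnorm_square: "(vnorm v)^2 = (\<Sum>i < dim_vec v. (cmod (v $ i))^2)"
  unfolding vnorm_def by (simp add: sum_nonneg)

lemma vnorm_smult: "vnorm (k \<cdot>\<^sub>v v) = cmod k * vnorm v"
proof -
  have "(vnorm (k \<cdot>\<^sub>v v))^2 = (cmod k * vnorm v)^2"
    unfolding vnorm_square power_mult_distrib by (simp add: norm_mult power_mult_distrib sum_distrib_left)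
  then show ?thesis using vnorm_nonneg by (metis norm_ge_zero power2_eq_iff_nonneg zero_le_mult_iff)
qed

lemma cmod_index_le_vnorm: "i < dim_vec v \<Longrightarrow> cmod (v $ i) \<le> vnorm v"
  unfolding vnorm_def using member_le_L2_set[of "{..<dim_vec v}" i "\<lambda>i. cmod (v $ i)"]
  by (simp add: L2_set_def)

lemma vnorm_le_sum_cmod: "vnorm v \<le> (\<Sum>i < dim_vec v. cmod (v $ i))"
  unfolding vnorm_def using L2_set_le_sum[of "{..<dim_vec v}" "\<lambda>i. cmod (v $ i)"]
  by (simp add: L2_set_def)

lemma bdd_above_op_norm_set:
  "bdd_above {vnorm (D *\<^sub>v v) | v. v \<in> carrier_vec (dim_col D) \<and> vnorm v \<le> 1}"
proof (rule bdd_aboveI)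
  fix x assume "x \<in> {vnorm (D *\<^sub>v v) | v. v \<in> carrier_vec (dim_col D) \<and> vnorm v \<le> 1}"
  then obtain v where v: "v \<in> carrier_vec (dim_col D)" "vnorm v \<le> 1" and x: "x = vnorm (D *\<^sub>v v)"
    by auto
  have "vnorm (D *\<^sub>v v) \<le> (\<Sum>i < dim_row D. cmod ((D *\<^sub>v v) $ i))"
    using vnorm_le_sum_cmod[of "D *\<^sub>v v"] by simp
  also have "\<dots> \<le> (\<Sum>i < dim_row D. \<Sum>j < dim_col D. cmod (D $$ (i, j)))"
  proof (intro sum_mono)
    fix i assume i: "i \<in> {..<dim_row D}"
    have "cmod ((D *\<^sub>v v) $ i) = cmod (\<Sum>j < dim_col D. D $$ (i, j) * v $ j)"
      using i v by (simp add: scalar_prod_def lessThan_atLeast0)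
    also have "\<dots> \<le> (\<Sum>j < dim_col D. cmod (D $$ (i, j)) * cmod (v $ j))"
      by (rule order_trans[OF norm_sum]) (simp add: norm_mult)
    also have "\<dots> \<le> (\<Sum>j < dim_col D. cmod (D $$ (i, j)))"
      using v by (intro sum_mono mult_left_le) (auto intro: order_trans[OF cmod_index_le_vnorm])
    finally show "cmod ((D *\<^sub>v v) $ i) \<le> (\<Sum>j < dim_col D. cmod (D $$ (i, j)))" .
  qed
  finally show "x \<le> (\<Sum>i < dim_row D. \<Sum>j < dim_col D. cmod (D $$ (i, j)))" using x by simp
qed

lemma vnorm_mult_vec_le_op_norm:
  assumes w: "w \<in> carrier_vec (dim_col D)"
  shows "vnorm (D *\<^sub>v w) \<le> op_norm D * vnorm w"
proof (cases "vnorm w = 0")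
  case True
  then have "w = 0\<^sub>v (dim_col D)"
    using w cmod_index_le_vnorm[of _ w] by (intro eq_vecI) auto
  then have "D *\<^sub>v w = 0\<^sub>v (dim_row D)" by (intro eq_vecI) (auto simp: scalar_prod_def)
  then show ?thesis using True by (simp add: vnorm_def)
next
  case False
  then have pos: "vnorm w > 0" using vnorm_nonneg by (metis less_eq_real_def)
  define w' where "w' = complex_of_real (1 / vnorm w) \<cdot>\<^sub>v w"
  have w': "w' \<in> carrier_vec (dim_col D)" "vnorm w' = 1"
    using w pos by (auto simp: w'_def vnorm_smult norm_divide)
  have "D *\<^sub>v w' = complex_of_real (1 / vnorm w) \<cdot>\<^sub>v (D *\<^sub>v w)"
    unfolding w'_def using w by (intro mult_mat_vec[of D "dim_row D" "dim_col D"]) auto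
  then have "vnorm (D *\<^sub>v w') = vnorm (D *\<^sub>v w) / vnorm w"
    using pos by (simp add: vnorm_smult norm_divide)
  moreover have "vnorm (D *\<^sub>v w') \<le> op_norm D"
    unfolding op_norm_def using w' by (intro cSup_upper[OF _ bdd_above_op_norm_set]) auto
  ultimately show ?thesis using pos by (simp add: divide_le_eq mult.commute)
qed

lemma op_norm_nonneg: "0 \<le> op_norm D"
proof -
  have "vnorm (0\<^sub>v (dim_col D)) \<le> 1" by (simp add: vnorm_def)
  then have "vnorm (D *\<^sub>v 0\<^sub>v (dim_col D)) \<le> op_norm D"
    unfolding op_norm_def by (intro cSup_upper[OF _ bdd_above_op_norm_set]) auto
  then show ?thesis using vnorm_nonneg order_trans by blast
qed

lemma cmod_sum_cnj_mult_square_le: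
  assumes "finite A"
  shows "(cmod (\<Sum>i \<in> A. cnj (p i) * q i))^2 \<le> (\<Sum>i \<in> A. (cmod (p i))^2) * (\<Sum>i \<in> A. (cmod (q i))^2)"
proof -
  have "cmod (\<Sum>i \<in> A. cnj (p i) * q i) \<le> (\<Sum>i \<in> A. \<bar>cmod (p i)\<bar> * \<bar>cmod (q i)\<bar>)"
    by (rule order_trans[OF norm_sum]) (simp add: norm_mult)
  also have "\<dots> \<le> L2_set (\<lambda>i. cmod (p i)) A * L2_set (\<lambda>i. cmod (q i)) A"
    by (rule L2_set_mult_ineq)
  finally have "(cmod (\<Sum>i \<in> A. cnj (p i) * q i))^2 \<le> (L2_set (\<lambda>i. cmod (p i)) A * L2_set (\<lambda>i. cmod (q i)) A)^2"
    by (intro power_mono) auto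
  then show ?thesis
    unfolding L2_set_def power_mult_distrib by (simp add: sum_nonneg)
qed

lemma index_vec_sandwich_mult_vec:
  assumes D: "D \<in> carrier_mat (N * K) (N * K)" and v: "v \<in> carrier_vec K" and c: "c < K"
  shows "(vec_sandwich R N K \<psi> D *\<^sub>v v) $ c = (\<Sum>a < R. \<Sum>i < N. cnj (\<psi> $ (a * N + i)) *
    (D *\<^sub>v vec (N * K) (\<lambda>y. \<psi> $ (a * N + y div K) * v $ (y mod K))) $ (i * K + c))"
proof -
  let ?f = "\<lambda>c' a i j. cnj (\<psi> $ (a * N + i)) * \<psi> $ (a * N + j) * D $$ (i * K + c, j * K + c') * v $ c'"
  have Dw: "(D *\<^sub>v vec (N * K) (\<lambda>y. \<psi> $ (a * N + y div K) * v $ (y mod K))) $ (i * K + c) =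
      (\<Sum>j < N. \<Sum>c' < K. D $$ (i * K + c, j * K + c') * (\<psi> $ (a * N + j) * v $ c'))"
    if "i < N" for a i
  proof -
    have "i * K + c < N * K" using that c by (rule mult_add_less_mult)
    then have "(D *\<^sub>v vec (N * K) (\<lambda>y. \<psi> $ (a * N + y div K) * v $ (y mod K))) $ (i * K + c) =
        (\<Sum>l < N * K. D $$ (i * K + c, l) * (\<psi> $ (a * N + l div K) * v $ (l mod K)))"
      using D by (simp add: scalar_prod_def lessThan_atLeast0)
    then show ?thesis by (simp only: sum_lessThan_mult) (intro sum.cong refl; simp)
  qed
  have "(vec_sandwich R N K \<psi> D *\<^sub>v v) $ c = (\<Sum>c' < K. \<Sum>a < R. \<Sum>i < N. \<Sum>j < N. ?f c' a i j)"
    using c v by (simp add: vec_sandwich_def scalar_prod_def lessThan_atLeast0 sum_distrib_right)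
  also have "\<dots> = (\<Sum>a < R. \<Sum>c' < K. \<Sum>i < N. \<Sum>j < N. ?f c' a i j)"
    by (rule sum.swap)
  also have "\<dots> = (\<Sum>a < R. \<Sum>i < N. \<Sum>c' < K. \<Sum>j < N. ?f c' a i j)"
    by (rule sum.cong[OF refl], rule sum.swap)
  also have "\<dots> = (\<Sum>a < R. \<Sum>i < N. \<Sum>j < N. \<Sum>c' < K. ?f c' a i j)"
    by (rule sum.cong[OF refl], rule sum.cong[OF refl], rule sum.swap)
  also have "\<dots> = (\<Sum>a < R. \<Sum>i < N. cnj (\<psi> $ (a * N + i)) *
      (D *\<^sub>v vec (N * K) (\<lambda>y. \<psi> $ (a * N + y div K) * v $ (y mod K))) $ (i * K + c))"
  proof (rule sum.cong[OF refl], rule sum.cong[OF refl])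
    fix a i assume "i \<in> {..<N}"
    then have "i < N" by simp
    then show "(\<Sum>j < N. \<Sum>c' < K. ?f c' a i j) = cnj (\<psi> $ (a * N + i)) *
        (D *\<^sub>v vec (N * K) (\<lambda>y. \<psi> $ (a * N + y div K) * v $ (y mod K))) $ (i * K + c)"
      by (subst Dw) (simp_all add: sum_distrib_left mult_ac)
  qed
  finally show ?thesis .
qed

lemma vnorm_slice_kron_square:
  assumes v: "v \<in> carrier_vec K"
  shows "(vnorm (vec (N * K) (\<lambda>y. \<psi> $ (a * N + y div K) * v $ (y mod K))))^2 =
    (\<Sum>i < N. (cmod (\<psi> $ (a * N + i)))^2) * (vnorm v)^2"
proof -
  have "(vnorm (vec (N * K) (\<lambda>y. \<psi> $ (a * N + y div K) * v $ (y mod K))))^2 =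
      (\<Sum>i < N. \<Sum>c < K. (cmod (\<psi> $ (a * N + (i * K + c) div K)))^2 * (cmod (v $ ((i * K + c) mod K)))^2)"
    by (simp add: vnorm_square sum_lessThan_mult mult_add_less_mult norm_mult power_mult_distrib
        del: div_mult_self3 div_mult_self4 mod_mult_self3 mod_mult_self4)
  also have "\<dots> = (\<Sum>i < N. \<Sum>c < K. (cmod (\<psi> $ (a * N + i)))^2 * (cmod (v $ c))^2)"
    by (intro sum.cong refl) simp
  also have "\<dots> = (\<Sum>i < N. (cmod (\<psi> $ (a * N + i)))^2) * (vnorm v)^2"
    using v by (simp add: vnorm_square sum_product)
  finally show ?thesis .
qed

lemma op_norm_vec_sandwich_le:
  assumes D: "D \<in> carrier_mat (N * K) (N * K)" and \<psi>: "\<psi> \<in> carrier_vec (R * N)" "vnorm \<psi> = 1"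
  shows "op_norm (vec_sandwich R N K \<psi> D) \<le> op_norm D"
  unfolding op_norm_def[of "vec_sandwich R N K \<psi> D"]
proof (rule cSup_least)
  let ?X = "vec_sandwich R N K \<psi> D"
  have "vnorm (0\<^sub>v K) = 0" by (simp add: vnorm_def)
  then show "{vnorm (?X *\<^sub>v v) | v. v \<in> carrier_vec (dim_col ?X) \<and> vnorm v \<le> 1} \<noteq> {}"
    by (auto simp: vec_sandwich_def intro!: exI[of _ "0\<^sub>v K"])
next
  let ?X = "vec_sandwich R N K \<psi> D"
  fix x assume "x \<in> {vnorm (?X *\<^sub>v v) | v. v \<in> carrier_vec (dim_col ?X) \<and> vnorm v \<le> 1}"
  then obtain v where v: "v \<in> carrier_vec K" "vnorm v \<le> 1" and x: "x = vnorm (?X *\<^sub>v v)"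
    by (auto simp: vec_sandwich_def)
  \<comment> \<open>\<open>w a = \<psi>\<^sub>a \<otimes> v\<close>, where \<open>\<psi>\<^sub>a\<close> is the slice of \<open>\<psi>\<close> at the first index \<open>a\<close>\<close>
  define w where "w a = vec (N * K) (\<lambda>y. \<psi> $ (a * N + y div K) * v $ (y mod K))" for a
  define g where "g c s = (D *\<^sub>v w (s div N)) $ ((s mod N) * K + c)" for c s
  have \<psi>1: "(\<Sum>s < R * N. (cmod (\<psi> $ s))^2) = 1"
    using \<psi> vnorm_square[of \<psi>] by simp
  have Xv: "(?X *\<^sub>v v) $ c = (\<Sum>s < R * N. cnj (\<psi> $ s) * g c s)" if "c < K" for c
    unfolding index_vec_sandwich_mult_vec[OF D v(1) that] sum_lessThan_mult g_def w_def
    by (intro sum.cong refl) auto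
  have "(vnorm (?X *\<^sub>v v))^2 = (\<Sum>c < K. (cmod ((?X *\<^sub>v v) $ c))^2)"
    by (simp add: vnorm_square vec_sandwich_def)
  also have "\<dots> \<le> (\<Sum>c < K. \<Sum>s < R * N. (cmod (g c s))^2)"
    using cmod_sum_cnj_mult_square_le[of "{..<R * N}" "\<lambda>s. \<psi> $ s"] \<psi>1
    by (intro sum_mono) (simp add: Xv)
  also have "\<dots> = (\<Sum>a < R. \<Sum>i < N. \<Sum>c < K. (cmod ((D *\<^sub>v w a) $ (i * K + c)))^2)"
    by (subst sum.swap) (simp add: sum_lessThan_mult g_def)
  also have "\<dots> = (\<Sum>a < R. (vnorm (D *\<^sub>v w a))^2)"
    using D by (simp add: vnorm_square sum_lessThan_mult del: index_mult_mat_vec)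
  also have "\<dots> \<le> (\<Sum>a < R. (op_norm D)^2 * (vnorm (w a))^2)"
  proof (intro sum_mono)
    fix a
    have "vnorm (D *\<^sub>v w a) \<le> op_norm D * vnorm (w a)"
      using D by (intro vnorm_mult_vec_le_op_norm) (simp add: w_def)
    then show "(vnorm (D *\<^sub>v w a))^2 \<le> (op_norm D)^2 * (vnorm (w a))^2"
      using vnorm_nonneg by (metis power_mono power_mult_distrib)
  qed
  also have "\<dots> = (op_norm D)^2 * (\<Sum>s < R * N. (cmod (\<psi> $ s))^2) * (vnorm v)^2"
    unfolding w_def vnorm_slice_kron_square[OF v(1)] sum_lessThan_mult[of _ R N]
    by (simp add: sum_distrib_left sum_distrib_right mult_ac)
  also have "\<dots> \<le> (op_norm D)^2"
    using v vnorm_nonneg[of v] \<psi>1 by (simp add: mult_left_le power_le_one)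
  finally show "x \<le> op_norm D" unfolding x using op_norm_nonneg by (rule power2_le_imp_le)
qed

lemma vnorm_unitary_mult_unit_vec:
  assumes U: "unitary d U" and j: "j < d"
  shows "vnorm (U *\<^sub>v unit_vec d j) = 1"
proof -
  have Uc: "U \<in> carrier_mat d d" using U unfolding unitary_def by simp
  have "complex_of_real ((vnorm (U *\<^sub>v unit_vec d j))^2) = (\<Sum>s < d. cnj (U $$ (s, j)) * U $$ (s, j))"
    using Uc j by (simp add: vnorm_square index_mult_unit_vec complex_norm_square mult.commute del: of_real_power)
  also have "\<dots> = (cadj U * U) $$ (j, j)"
    using Uc j by (simp del: index_mult_mat(1) add: index_mult_mat_lessThan)
  also have "\<dots> = 1" using U j unfolding unitary_def by simp
  finally have "(vnorm (U *\<^sub>v unit_vec d j))^2 = 1" by (metis of_real_eq_1_iff)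
  then show ?thesis using vnorm_nonneg[of "U *\<^sub>v unit_vec d j"] by (simp add: power2_eq_1_iff)
qed

theorem theorem1:
  fixes n k r m :: nat and \<alpha> \<epsilon> :: real
    and N :: "complex mat \<Rightarrow> complex mat"
    and \<rho> U\<rho> UNc :: "complex mat"
  assumes N_lin: "lin_map (2^n) (2^k) N"
    and rho: "density_matrix (2^n) \<rho>"
    and Urho: "unitary (2^(r+n)) U\<rho>"
    and purif: "ptrace1 (2^r) (2^n)
                  (outer (U\<rho> *\<^sub>v unit_vec (2^(r+n)) 0) (U\<rho> *\<^sub>v unit_vec (2^(r+n)) 0)) = \<rho>"
    and UNc: "block_encoding \<alpha> m (n+k) \<epsilon> (ptranspose1 (2^n) (2^k) (choi (2^n) (2^k) N)) UNc"
  shows "block_encoding \<alpha> (m+r+n) k \<epsilon> (N \<rho>)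
           (kron (kron (1\<^sub>m (2^m)) (cadj U\<rho>)) (1\<^sub>m (2^k))
            * embed_mid (2^m) (2^r) (2^(n+k)) UNc
            * kron (kron (1\<^sub>m (2^m)) U\<rho>) (1\<^sub>m (2^k)))"
    (is "block_encoding _ _ _ _ _ ?V")
proof -
  let ?\<psi> = "U\<rho> *\<^sub>v unit_vec (2^(r+n)) 0" and ?\<Lambda> = "ptranspose1 (2^n) (2^k) (choi (2^n) (2^k) N)"
  let ?W = "encoded_block m (2^(n+k)) UNc"
  have e: "(2::nat)^(r+n) = 2^r * 2^n" "(2::nat)^(n+k) = 2^n * 2^k" "(2::nat)^(m+(n+k)) = 2^m * (2^n * 2^k)"
    "(2::nat)^(m+r+n+k) = 2^m * 2^r * 2^n * 2^k"
    by (simp_all add: power_add)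
  from UNc have \<alpha>\<epsilon>: "0 \<le> \<alpha>" "0 \<le> \<epsilon>" and \<Lambda>: "?\<Lambda> \<in> carrier_mat (2^n * 2^k) (2^n * 2^k)"
    and UNc_unitary: "unitary (2^(m+(n+k))) UNc" and err: "op_norm (?\<Lambda> - complex_of_real \<alpha> \<cdot>\<^sub>m ?W) \<le> \<epsilon>"
    unfolding block_encoding_iff e(2) by auto
  have \<psi>: "?\<psi> \<in> carrier_vec (2^r * 2^n)" "vnorm ?\<psi> = 1"
    using Urho by (auto simp: unitary_def e(1) vnorm_unitary_mult_unit_vec)
  have "N \<rho> = vec_sandwich (2^r) (2^n) (2^k) ?\<psi> ?\<Lambda>"
    using lin_map_ptrace1_outer[OF N_lin \<psi>(1)] purif by simp
  moreover have "encoded_block (m+r+n) (2^k) ?V = vec_sandwich (2^r) (2^n) (2^k) ?\<psi> ?W"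
    using Urho UNc_unitary unfolding unitary_def by (intro encoded_block_conj_embed_mid) auto
  moreover have W: "?W \<in> carrier_mat (2^n * 2^k) (2^n * 2^k)"
    using encoded_block_carrier e(2) by metis
  ultimately have "N \<rho> - complex_of_real \<alpha> \<cdot>\<^sub>m encoded_block (m+r+n) (2^k) ?V =
      vec_sandwich (2^r) (2^n) (2^k) ?\<psi> (?\<Lambda> - complex_of_real \<alpha> \<cdot>\<^sub>m ?W)"
    using \<Lambda> by (simp add: vec_sandwich_diff)
  moreover have "op_norm (vec_sandwich (2^r) (2^n) (2^k) ?\<psi> (?\<Lambda> - complex_of_real \<alpha> \<cdot>\<^sub>m ?W)) \<le> \<epsilon>"
    using \<Lambda> W by (intro order_trans[OF op_norm_vec_sandwich_le[OF _ \<psi>] err] minus_carrier_mat) auto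
  moreover have "unitary (2^(m+r+n+k)) ?V"
    using unitary_conj_embed_mid[of "2^r" "2^n" U\<rho> "2^m" "2^k" UNc] Urho UNc_unitary by (simp only: e)
  moreover have "N \<rho> \<in> carrier_mat (2^k) (2^k)"
    using N_lin rho unfolding lin_map_def density_matrix_def by simp
  ultimately show ?thesis using \<alpha>\<epsilon> unfolding block_encoding_iff by simp
qed

end
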